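(* Let $n>k\ge 1$ be integers, not both even, with $n=Mk$ for a positive integer $M$. Let $\alpha=\lceil n/2\rceil-\lfloor (n-k)/2\rfloor$, $\beta=k-\alpha$, and $G=\sqrt{n/k}\,W_n^H\Sigma W_k$. Let $i_0\in\{1,\dots,M\}$ and let $G_k$ be the $k\times k$ submatrix of $G$ consisting of rows $i_0,i_0+M,i_0+2M,\dots,i_0+(k-1)M$. Then $\det(G_kG_k^H)=1$, and the systematic DFT frame $G_{\mathrm{sys}}=GG_k^{-1}$ is tight.
   Context: For a positive integer $l$, $W_l$ denotes the unitary $l\times l$ DFT matrix, $(W_l)_{r,s}=\frac{1}{\sqrt l}e^{-j2\pi(r-1)(s-1)/l}$, and $^H$ denotes conjugate transpose. $\Sigma$ is the $n\times k$ matrix $\begin{pmatrix} I_\alpha & 0\\ 0 & 0\\ 0 & I_\beta\end{pmatrix}$: its first $\alpha$ rows are $(I_\alpha\ 0)$, its last $\beta$ rows are $(0\ I_\beta)$, and its middle $n-k$ rows are zero. A frame with $n\times k$ analysis operator $F$ is tight if $F^HF=cI_k$ for some $c>0$. *)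

theory Defs
  imports "HOL-Analysis.Analysis" "Jordan_Normal_Form.Schur_Decomposition"
    "Jordan_Normal_Form.Gauss_Jordan_Elimination"
begin

text \<open>Unitary l x l DFT matrix, 0-based indices: entry (r,s) corresponds to (r+1,s+1) of the paper.\<close>
definition DFT :: "nat \<Rightarrow> complex mat" where
  "DFT l = mat l l (\<lambda>(r, s). complex_of_real (1 / sqrt (real l)) *
       exp (- \<i> * complex_of_real (2 * pi * real r * real s / real l)))"

text \<open>The n x k matrix Sigma: identity block I_alpha in the top-left, I_beta in the bottom-right,
  zero middle rows (beta = k - alpha).\<close>
definition Sigma :: "nat \<Rightarrow> nat \<Rightarrow> nat \<Rightarrow> complex mat" where
  "Sigma n k \<alpha> = mat n k (\<lambda>(i, j).
      if i < \<alpha> \<and> j = i then 1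
      else if n - (k - \<alpha>) \<le> i \<and> \<alpha> \<le> j \<and> i - (n - (k - \<alpha>)) = j - \<alpha> then 1
      else 0)"

definition alpha_par :: "nat \<Rightarrow> nat \<Rightarrow> nat" where
  "alpha_par n k = nat (\<lceil>real n / 2\<rceil> - \<lfloor>(real n - real k) / 2\<rfloor>)"

definition dft_frame :: "nat \<Rightarrow> nat \<Rightarrow> complex mat" where
  "dft_frame n k = complex_of_real (sqrt (real n / real k)) \<cdot>\<^sub>m
      (mat_adjoint (DFT n) * Sigma n k (alpha_par n k) * DFT k)"

text \<open>k x k submatrix of G with rows i0, i0+M, ..., i0+(k-1)M (1-based i0).\<close>
definition row_sub :: "complex mat \<Rightarrow> nat \<Rightarrow> nat \<Rightarrow> nat \<Rightarrow> complex mat" where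
  "row_sub G k M i0 = mat k (dim_col G) (\<lambda>(r, c). G $$ ((i0 - 1) + r * M, c))"

definition tight_frame :: "complex mat \<Rightarrow> bool" where
  "tight_frame F \<longleftrightarrow> (\<exists>c::real. c > 0 \<and> mat_adjoint F * F = complex_of_real c \<cdot>\<^sub>m 1\<^sub>m (dim_col F))"

end

theory Submission
  imports Defs
begin

text \<open>Write \<open>F = W\<^sub>n\<^sup>H \<Sigma>\<close>, so that \<open>G = \<surd>(n/k) F W\<^sub>k\<close>. The columns of \<open>\<Sigma>\<close> are
  distinct standard basis vectors, hence \<open>F\<close> has orthonormal columns and \<open>G\<^sup>H G = (n/k) I\<close>.
  Column \<open>c\<close> of \<open>F\<close> is \<open>(\<zeta>\<^sub>n\<^bsup>\<tau>(c) r\<^esup>)\<^sub>r / \<surd>n\<close>, where \<open>\<tau>(c) \<equiv> c (mod k)\<close> is the row of the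
  \<open>1\<close> in column \<open>c\<close> of \<open>\<Sigma>\<close>. On the rows \<open>r = i + mM\<close> we have
  \<open>\<zeta>\<^sub>n\<^bsup>\<tau>(c) r\<^esup> = \<zeta>\<^sub>n\<^bsup>\<tau>(c) i\<^esup> \<zeta>\<^sub>k\<^bsup>c m\<^esup>\<close>, because \<open>\<zeta>\<^sub>n\<^sup>M = \<zeta>\<^sub>k\<close>, so these rows of \<open>F\<close> are orthogonal
  with squared norm \<open>k/n\<close>; as \<open>G G\<^sup>H = (n/k) F F\<^sup>H\<close>, the submatrix \<open>G\<^sub>k\<close> is unitary. Then
  \<open>G\<^sub>k\<^sup>-\<^sup>1 = G\<^sub>k\<^sup>H\<close> and \<open>(G G\<^sub>k\<^sup>H)\<^sup>H (G G\<^sub>k\<^sup>H) = G\<^sub>k (G\<^sup>H G) G\<^sub>k\<^sup>H = (n/k) I\<close>.\<close>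

subsection \<open>Roots of unity\<close>

definition unit_root :: "nat \<Rightarrow> complex" where
  "unit_root l = exp (2 * of_real pi * \<i> / of_nat l)"

lemma unit_root_pow: "unit_root l ^ j = exp (2 * of_real pi * \<i> * of_nat j / of_nat l)"
proof -
  have "unit_root l ^ j = exp (of_nat j * (2 * of_real pi * \<i> / of_nat l))"
    unfolding unit_root_def by (simp only: exp_of_nat_mult)
  thus ?thesis by (simp add: field_simps)
qed

lemma unit_root_pow_eq_iff: "1 \<le> l \<Longrightarrow> unit_root l ^ a = unit_root l ^ b \<longleftrightarrow> a mod l = b mod l"
  unfolding unit_root_pow by (rule complex_root_unity_eq)

lemma unit_root_pow_self: "1 \<le> l \<Longrightarrow> unit_root l ^ l = 1"
  using unit_root_pow_eq_iff[of l l 0] by simp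

lemma cnj_unit_root_pow_mult: "cnj (unit_root l ^ p) * unit_root l ^ p = 1"
proof -
  have "cnj (unit_root l) * unit_root l
      = exp (cnj (2 * of_real pi * \<i> / of_nat l) + 2 * of_real pi * \<i> / of_nat l)"
    unfolding unit_root_def by (simp add: exp_cnj flip: exp_add)
  also have "cnj (2 * of_real pi * \<i> / of_nat l) + 2 * of_real pi * \<i> / of_nat l = 0"
    by (simp add: complex_eq_iff)
  finally show ?thesis by (metis complex_cnj_power power_mult_distrib power_one exp_zero)
qed

lemma unit_root_mult_pow:
  assumes "0 < M" "0 < k"
  shows "unit_root (M * k) ^ M = unit_root k"
proof -
  have "unit_root (M * k) ^ M = exp (2 * of_real pi * \<i> * of_nat M / of_nat (M * k))"
    by (rule unit_root_pow)
  also have "2 * of_real pi * \<i> * of_nat M / of_nat (M * k) = (2 * of_real pi * \<i> / of_nat k :: complex)"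
    using assms by (simp add: field_simps)
  finally show ?thesis unfolding unit_root_def .
qed

lemma unit_root_orthogonal:
  assumes l: "1 \<le> l" and a: "a < l" and b: "b < l"
  shows "(\<Sum>j<l. unit_root l ^ (j * a) * cnj (unit_root l ^ (j * b))) = (if a = b then of_nat l else 0)"
proof -
  define z where "z = unit_root l"
  define w where "w = z ^ a * cnj z ^ b"
  have cnj_z: "cnj z ^ b * z ^ b = 1"
    unfolding z_def using cnj_unit_root_pow_mult by (simp add: complex_cnj_power)
  have "w ^ l = (z ^ l) ^ a * cnj (z ^ l) ^ b"
    unfolding w_def by (simp add: power_mult_distrib flip: power_mult) (simp add: mult.commute)
  hence w_pow: "w ^ l = 1"
    using unit_root_pow_self[OF l] z_def by simp
  have w_eq_1: "w = 1 \<longleftrightarrow> a = b"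
  proof
    assume "w = 1"
    hence "z ^ a * (cnj z ^ b * z ^ b) = z ^ b" unfolding w_def by (metis mult.assoc mult_1)
    hence "z ^ a = z ^ b" using cnj_z by simp
    thus "a = b" using unit_root_pow_eq_iff[OF l] a b z_def by simp
  qed (use cnj_z in \<open>simp add: w_def mult.commute\<close>)
  have "z ^ (j * a) * cnj (z ^ (j * b)) = w ^ j" for j
    unfolding w_def by (simp add: power_mult_distrib power_mult mult.commute)
  hence "(\<Sum>j<l. z ^ (j * a) * cnj (z ^ (j * b))) = (\<Sum>j<l. w ^ j)" by simp
  also have "\<dots> = (if a = b then of_nat l else 0)"
    using w_eq_1 w_pow by (simp add: sum_gp_strict)
  finally show ?thesis unfolding z_def .
qed

lemma of_real_inv_sqrt_square:
  "0 < l \<Longrightarrow> complex_of_real (1 / sqrt (real l)) * complex_of_real (1 / sqrt (real l)) = 1 / of_nat l"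
  by (simp flip: of_real_mult add: real_sqrt_mult[symmetric])


subsection \<open>Adjoints\<close>

lemma dim_mat_adjoint [simp]:
  "dim_row (mat_adjoint A) = dim_col A" "dim_col (mat_adjoint A) = dim_row A"
  unfolding mat_adjoint_def by simp_all

lemma mat_adjoint_carrier: "A \<in> carrier_mat r c \<Longrightarrow> mat_adjoint A \<in> carrier_mat c r"
  unfolding carrier_mat_def by simp

lemma index_mat_adjoint [simp]:
  "i < dim_col A \<Longrightarrow> j < dim_row A \<Longrightarrow> mat_adjoint A $$ (i, j) = conjugate (A $$ (j, i))"
  unfolding mat_adjoint_def by (simp add: mat_of_rows_index)

lemma mat_adjoint_adjoint [simp]: "mat_adjoint (mat_adjoint (A :: complex mat)) = A"
  by (rule eq_matI) simp_all

lemma mat_adjoint_mult: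
  assumes "A \<in> carrier_mat r m" and "B \<in> carrier_mat m c"
  shows "mat_adjoint ((A :: complex mat) * B) = mat_adjoint B * mat_adjoint A"
  using assms by (intro eq_matI) (simp_all add: scalar_prod_def sum_distrib_left mult.commute)

lemma mat_adjoint_smult: "mat_adjoint (a \<cdot>\<^sub>m (A :: complex mat)) = cnj a \<cdot>\<^sub>m mat_adjoint A"
  by (rule eq_matI) simp_all

lemma smult_mult_smult:
  assumes "A \<in> carrier_mat r m" and "B \<in> carrier_mat m c"
  shows "(a \<cdot>\<^sub>m A) * (b \<cdot>\<^sub>m B) = (a * b :: complex) \<cdot>\<^sub>m (A * B)"
  using assms by (intro eq_matI) (auto simp: scalar_prod_def sum_distrib_left mult_ac)

lemma mat_adjoint_mult_self_mult:
  fixes A B :: "complex mat"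
  assumes A: "A \<in> carrier_mat n m" and B: "B \<in> carrier_mat m k"
  shows "mat_adjoint (A * B) * (A * B) = mat_adjoint B * (mat_adjoint A * A) * B"
proof -
  have Ah: "mat_adjoint A \<in> carrier_mat m n" and Bh: "mat_adjoint B \<in> carrier_mat k m"
    using A B by (simp_all add: mat_adjoint_carrier)
  have "mat_adjoint (A * B) * (A * B) = mat_adjoint B * (mat_adjoint A * (A * B))"
    unfolding mat_adjoint_mult[OF A B] using Bh Ah A B by (simp add: assoc_mult_mat[of _ k m _ n _ k])
  also have "\<dots> = mat_adjoint B * (mat_adjoint A * A) * B"
    using Bh Ah A B by (simp add: assoc_mult_mat[of _ m n _ n _ k] assoc_mult_mat[of _ k m _ m _ k])
  finally show ?thesis .
qed

lemma mult_self_mult_mat_adjoint: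
  fixes A B :: "complex mat"
  assumes A: "A \<in> carrier_mat n m" and B: "B \<in> carrier_mat m k"
  shows "(A * B) * mat_adjoint (A * B) = A * (B * mat_adjoint B) * mat_adjoint A"
proof -
  have Ah: "mat_adjoint A \<in> carrier_mat m n" and Bh: "mat_adjoint B \<in> carrier_mat k m"
    using A B by (simp_all add: mat_adjoint_carrier)
  have "(A * B) * mat_adjoint (A * B) = A * (B * (mat_adjoint B * mat_adjoint A))"
    unfolding mat_adjoint_mult[OF A B] using Bh Ah A B
    by (simp add: assoc_mult_mat[of _ n m _ k _ n] assoc_mult_mat[of _ n m _ m _ n])
  also have "\<dots> = A * (B * mat_adjoint B) * mat_adjoint A"
    using Bh Ah A B by (simp add: assoc_mult_mat[of _ m k _ k _ n] assoc_mult_mat[of _ n m _ m _ n])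
  finally show ?thesis .
qed

lemma mat_inverse_unitary:
  assumes H: "(H :: complex mat) \<in> carrier_mat k k" and unitary: "H * mat_adjoint H = 1\<^sub>m k"
  shows "mat_inverse H = Some (mat_adjoint H)"
proof -
  have Hh: "mat_adjoint H \<in> carrier_mat k k" using H by (rule mat_adjoint_carrier)
  have unitary': "mat_adjoint H * H = 1\<^sub>m k" by (rule mat_mult_left_right_inverse[OF H Hh unitary])
  have "det H \<noteq> 0" using det_mult[OF H Hh] unitary by auto
  then obtain B where B: "mat_inverse H = Some B"
    using mat_inverse(1)[OF H] det_non_zero_imp_unit[OF H] by fastforce
  hence HB: "H * B = 1\<^sub>m k" and Bc: "B \<in> carrier_mat k k" using mat_inverse(2)[OF H] by auto
  have "B = (mat_adjoint H * H) * B" using unitary' Bc by simp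
  also have "\<dots> = mat_adjoint H" using assoc_mult_mat[OF Hh H Bc] HB right_mult_one_mat[OF Hh] by simp
  finally show ?thesis using B by simp
qed

lemma tight_frame_mult_adjoint_unitary:
  fixes G H :: "complex mat"
  assumes G: "G \<in> carrier_mat n k" and H: "H \<in> carrier_mat k k" and "c > 0"
    and tight: "mat_adjoint G * G = of_real c \<cdot>\<^sub>m 1\<^sub>m k" and unitary: "H * mat_adjoint H = 1\<^sub>m k"
  shows "tight_frame (G * mat_adjoint H)"
  unfolding tight_frame_def
proof (intro exI conjI)
  have Hh: "mat_adjoint H \<in> carrier_mat k k" using H by (rule mat_adjoint_carrier)
  have "mat_adjoint (G * mat_adjoint H) * (G * mat_adjoint H) = H * (of_real c \<cdot>\<^sub>m 1\<^sub>m k) * mat_adjoint H"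
    using mat_adjoint_mult_self_mult[OF G Hh] by (simp add: tight)
  also have "\<dots> = of_real c \<cdot>\<^sub>m (H * mat_adjoint H)"
    by (simp add: mult_smult_distrib[OF H one_carrier_mat] right_mult_one_mat[OF H]
        mult_smult_assoc_mat[OF H Hh])
  finally show "mat_adjoint (G * mat_adjoint H) * (G * mat_adjoint H)
      = of_real c \<cdot>\<^sub>m 1\<^sub>m (dim_col (G * mat_adjoint H))"
    using unitary H by simp
qed (fact \<open>c > 0\<close>)

lemma row_sub_mult_adjoint_index:
  assumes "m < k" "m' < k" "i0 - 1 + m * M < dim_row G" "i0 - 1 + m' * M < dim_row G"
  shows "(row_sub G k M i0 * mat_adjoint (row_sub G k M i0)) $$ (m, m')
    = (G * mat_adjoint G) $$ (i0 - 1 + m * M, i0 - 1 + m' * M)"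
  using assms unfolding row_sub_def by (simp add: scalar_prod_def)


subsection \<open>The DFT matrix and \<open>\<Sigma>\<close>\<close>

lemma DFT_carrier: "DFT l \<in> carrier_mat l l"
  unfolding DFT_def by simp

lemma DFT_index:
  assumes "r < l" "s < l"
  shows "DFT l $$ (r, s) = of_real (1 / sqrt (real l)) * cnj (unit_root l ^ (r * s))"
proof -
  have "DFT l $$ (r, s) = of_real (1 / sqrt (real l)) *
       exp (- \<i> * complex_of_real (2 * pi * real r * real s / real l))"
    using assms unfolding DFT_def by simp
  also have "- \<i> * complex_of_real (2 * pi * real r * real s / real l)
      = cnj (2 * of_real pi * \<i> * of_nat (r * s) / of_nat l)"
    by (simp add: complex_eq_iff)
  finally show ?thesis by (simp add: unit_root_pow exp_cnj)
qed

lemma DFT_unitary: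
  assumes l: "1 \<le> l"
  shows "mat_adjoint (DFT l) * DFT l = 1\<^sub>m l" and "DFT l * mat_adjoint (DFT l) = 1\<^sub>m l"
proof -
  have dims: "dim_row (DFT l) = l" "dim_col (DFT l) = l" using DFT_carrier by auto
  define s where "s = complex_of_real (1 / sqrt (real l))"
  have scale: "s * s * of_nat l = 1"
    using of_real_inv_sqrt_square[of l] l unfolding s_def by simp
  have entry: "(\<Sum>r<l. DFT l $$ (r, i) * cnj (DFT l $$ (r, j))) = 1\<^sub>m l $$ (i, j)"
    if i: "i < l" and j: "j < l" for i j
  proof -
    have "(\<Sum>r<l. DFT l $$ (r, i) * cnj (DFT l $$ (r, j)))
        = (\<Sum>r<l. s * s * (unit_root l ^ (r * j) * cnj (unit_root l ^ (r * i))))"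
      using i j by (intro sum.cong) (simp_all add: DFT_index s_def mult_ac)
    also have "\<dots> = s * s * (if j = i then of_nat l else 0)"
      by (simp only: sum_distrib_left[symmetric] unit_root_orthogonal[OF l j i])
    finally show ?thesis using i j scale by auto
  qed
  show "mat_adjoint (DFT l) * DFT l = 1\<^sub>m l"
  proof (rule eq_matI)
    fix i j assume "i < dim_row (1\<^sub>m l)" "j < dim_col (1\<^sub>m l)"
    thus "(mat_adjoint (DFT l) * DFT l) $$ (i, j) = 1\<^sub>m l $$ (i, j)"
      using dims entry[of j i] by (auto simp: scalar_prod_def lessThan_atLeast0 mult.commute)
  qed (simp_all add: dims)
  show "DFT l * mat_adjoint (DFT l) = 1\<^sub>m l"
    using mat_mult_left_right_inverse[OF mat_adjoint_carrier[OF DFT_carrier] DFT_carrier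
        \<open>mat_adjoint (DFT l) * DFT l = 1\<^sub>m l\<close>] .
qed

definition Sigma_row :: "nat \<Rightarrow> nat \<Rightarrow> nat \<Rightarrow> nat \<Rightarrow> nat" where
  "Sigma_row n k a c = (if c < a then c else n - k + c)"

lemma Sigma_row_less: "k \<le> n \<Longrightarrow> c < k \<Longrightarrow> Sigma_row n k a c < n"
  unfolding Sigma_row_def by auto

lemma Sigma_row_inj:
  "k \<le> n \<Longrightarrow> c < k \<Longrightarrow> c' < k \<Longrightarrow> Sigma_row n k a c = Sigma_row n k a c' \<longleftrightarrow> c = c'"
  unfolding Sigma_row_def by auto

lemma Sigma_row_mod:
  assumes "k dvd n"
  shows "Sigma_row n k a c mod k = c mod k"
proof (cases "c < a")
  case False
  from assms obtain q where "n = k * q" by blast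
  hence "n - k + c = c + k * (q - 1)" by (cases q) (auto simp: algebra_simps)
  thus ?thesis using False unfolding Sigma_row_def by simp
qed (simp add: Sigma_row_def)

lemma Sigma_carrier: "Sigma n k a \<in> carrier_mat n k"
  unfolding Sigma_def by simp

lemma Sigma_index:
  assumes "a \<le> k" "k \<le> n" "i < n" "c < k"
  shows "Sigma n k a $$ (i, c) = (if i = Sigma_row n k a c then 1 else 0)"
  using assms unfolding Sigma_def Sigma_row_def by auto

lemma Sigma_isometry:
  assumes "a \<le> k" "k \<le> n"
  shows "mat_adjoint (Sigma n k a) * Sigma n k a = 1\<^sub>m k"
proof (rule eq_matI)
  fix i j assume "i < dim_row (1\<^sub>m k)" "j < dim_col (1\<^sub>m k)"
  hence i: "i < k" and j: "j < k" by simp_all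
  have "(mat_adjoint (Sigma n k a) * Sigma n k a) $$ (i, j)
      = (\<Sum>r<n. if r = Sigma_row n k a i \<and> r = Sigma_row n k a j then 1 else 0)"
    using i j assms Sigma_carrier[of n k a]
    by (auto simp: scalar_prod_def lessThan_atLeast0 Sigma_index intro!: sum.cong)
  thus "(mat_adjoint (Sigma n k a) * Sigma n k a) $$ (i, j) = 1\<^sub>m k $$ (i, j)"
    using i j assms Sigma_row_less Sigma_row_inj by (auto simp: sum.delta)
qed (use Sigma_carrier in auto)

definition partial_idft :: "nat \<Rightarrow> nat \<Rightarrow> nat \<Rightarrow> complex mat" where
  "partial_idft n k a = mat_adjoint (DFT n) * Sigma n k a"

lemma partial_idft_carrier: "partial_idft n k a \<in> carrier_mat n k"
  unfolding partial_idft_def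
  by (rule mult_carrier_mat[OF mat_adjoint_carrier[OF DFT_carrier] Sigma_carrier])

lemma partial_idft_index:
  assumes "a \<le> k" "k \<le> n" "r < n" "c < k"
  shows "partial_idft n k a $$ (r, c) = of_real (1 / sqrt (real n)) * unit_root n ^ (Sigma_row n k a c * r)"
proof -
  have "partial_idft n k a $$ (r, c) = (\<Sum>i<n. mat_adjoint (DFT n) $$ (r, i) * Sigma n k a $$ (i, c))"
    using assms DFT_carrier[of n] Sigma_carrier[of n k a] unfolding partial_idft_def
    by (simp add: scalar_prod_def lessThan_atLeast0)
  also have "\<dots> = (\<Sum>i<n. if i = Sigma_row n k a c
                            then of_real (1 / sqrt (real n)) * unit_root n ^ (i * r) else 0)"
    using assms DFT_carrier[of n] by (intro sum.cong) (simp_all add: Sigma_index DFT_index)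
  finally show ?thesis using Sigma_row_less[OF assms(2,4)] by simp
qed

lemma partial_idft_isometry:
  assumes "1 \<le> n" "a \<le> k" "k \<le> n"
  shows "mat_adjoint (partial_idft n k a) * partial_idft n k a = 1\<^sub>m k"
  using mat_adjoint_mult_self_mult[OF mat_adjoint_carrier[OF DFT_carrier] Sigma_carrier]
    DFT_unitary(2)[OF assms(1)] Sigma_isometry[OF assms(2,3)] Sigma_carrier[of n k a]
  by (simp add: partial_idft_def mat_adjoint_carrier)

lemma unit_root_Sigma_row_coset:
  assumes "0 < M" "0 < k" "n = M * k"
  shows "unit_root n ^ (Sigma_row n k a c * (i + m * M))
    = unit_root n ^ (Sigma_row n k a c * i) * unit_root k ^ (c * m)"
proof -
  have "Sigma_row n k a c mod k = c mod k"
    using assms by (intro Sigma_row_mod) simp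
  hence "Sigma_row n k a c * m mod k = c * m mod k" by (metis mod_mult_left_eq)
  hence power: "unit_root k ^ (Sigma_row n k a c * m) = unit_root k ^ (c * m)"
    using assms unit_root_pow_eq_iff[of k] by simp
  have "unit_root n ^ (Sigma_row n k a c * (i + m * M))
      = unit_root n ^ (Sigma_row n k a c * i) * (unit_root n ^ M) ^ (Sigma_row n k a c * m)"
    by (simp add: algebra_simps power_add flip: power_mult)
  also have "unit_root n ^ M = unit_root k" using unit_root_mult_pow assms by simp
  finally show ?thesis using power by simp
qed

lemma partial_idft_coset_rows_orthogonal:
  assumes "0 < M" "0 < k" "n = M * k" "a \<le> k" "i + m * M < n" "i + m' * M < n" "m < k" "m' < k"
  shows "(partial_idft n k a * mat_adjoint (partial_idft n k a)) $$ (i + m * M, i + m' * M)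
    = (if m = m' then of_nat k / of_nat n else 0)"
proof -
  have kn: "k \<le> n" using assms by simp
  define s where "s = complex_of_real (1 / sqrt (real n))"
  define e where "e c r = unit_root n ^ (Sigma_row n k a c * r)" for c r
  have "(partial_idft n k a * mat_adjoint (partial_idft n k a)) $$ (i + m * M, i + m' * M)
      = (\<Sum>c<k. s * s * (e c (i + m * M) * cnj (e c (i + m' * M))))"
    using assms kn partial_idft_carrier[of n k a]
    by (auto simp: scalar_prod_def lessThan_atLeast0 partial_idft_index s_def e_def mult_ac
        intro!: sum.cong)
  also have "\<dots> = s * s * (\<Sum>c<k. unit_root k ^ (c * m) * cnj (unit_root k ^ (c * m')))"
  proof (simp only: sum_distrib_left[symmetric], intro arg_cong[where f = "(*) (s * s)"] sum.cong refl)
    fix c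
    have "e c (i + m * M) * cnj (e c (i + m' * M))
        = (cnj (e c i) * e c i) * (unit_root k ^ (c * m) * cnj (unit_root k ^ (c * m')))"
      unfolding e_def unit_root_Sigma_row_coset[OF assms(1-3)] by (simp add: mult_ac)
    thus "e c (i + m * M) * cnj (e c (i + m' * M)) = unit_root k ^ (c * m) * cnj (unit_root k ^ (c * m'))"
      unfolding e_def by (simp only: cnj_unit_root_pow_mult mult_1)
  qed
  also have "\<dots> = s * s * (if m = m' then of_nat k else 0)"
    using unit_root_orthogonal[of k m m'] assms by (simp add: mult.commute)
  finally show ?thesis using assms of_real_inv_sqrt_square[of n] by (simp add: s_def)
qed


subsection \<open>The DFT frame and its submatrix\<close>

lemma alpha_par_le:
  assumes "1 \<le> k" "k \<le> n"
  shows "alpha_par n k \<le> k"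
proof -
  define C where "C = \<lceil>real n / 2\<rceil>"
  define D where "D = \<lfloor>(real n - real k) / 2\<rfloor>"
  have "real_of_int C < real n / 2 + 1" and "(real n - real k) / 2 < real_of_int D + 1"
    unfolding C_def D_def by linarith+
  hence "real_of_int (2 * C) < real_of_int (int n + 2)"
    and "real_of_int (int n - int k) < real_of_int (2 * D + 2)"
    by simp_all
  hence "2 * C < int n + 2" and "int n - int k < 2 * D + 2"
    by (simp_all only: of_int_less_iff)
  hence "C - D \<le> int k" using assms by presburger
  thus ?thesis unfolding alpha_par_def C_def D_def by simp
qed

lemma dft_frame_eq: "dft_frame n k
    = complex_of_real (sqrt (real n / real k)) \<cdot>\<^sub>m (partial_idft n k (alpha_par n k) * DFT k)"
  unfolding dft_frame_def partial_idft_def ..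

lemma dft_frame_carrier: "dft_frame n k \<in> carrier_mat n k"
  unfolding dft_frame_eq
  by (rule smult_carrier_mat[OF mult_carrier_mat[OF partial_idft_carrier DFT_carrier]])

lemma cnj_of_real_sqrt_mult: "0 \<le> x \<Longrightarrow> cnj (complex_of_real (sqrt x)) * complex_of_real (sqrt x) = of_real x"
  by (simp flip: of_real_mult)

lemma dft_frame_gram:
  assumes "1 \<le> k" "k \<le> n"
  shows "mat_adjoint (dft_frame n k) * dft_frame n k = of_real (real n / real k) \<cdot>\<^sub>m 1\<^sub>m k"
proof -
  define c where "c = complex_of_real (sqrt (real n / real k))"
  define A where "A = partial_idft n k (alpha_par n k) * DFT k"
  have A: "A \<in> carrier_mat n k"
    unfolding A_def by (rule mult_carrier_mat[OF partial_idft_carrier DFT_carrier])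
  have "mat_adjoint A * A = 1\<^sub>m k"
    using mat_adjoint_mult_self_mult[OF partial_idft_carrier DFT_carrier] DFT_unitary(1)[OF assms(1)]
      partial_idft_isometry[OF _ alpha_par_le[OF assms] assms(2)] assms DFT_carrier[of k]
    by (simp add: A_def)
  moreover have "mat_adjoint (c \<cdot>\<^sub>m A) * (c \<cdot>\<^sub>m A) = (cnj c * c) \<cdot>\<^sub>m (mat_adjoint A * A)"
    by (simp only: mat_adjoint_smult smult_mult_smult[OF mat_adjoint_carrier[OF A] A])
  moreover have "cnj c * c = of_real (real n / real k)"
    unfolding c_def by (rule cnj_of_real_sqrt_mult) simp
  ultimately show ?thesis unfolding dft_frame_eq A_def c_def by simp
qed

lemma dft_frame_mult_adjoint:
  assumes "1 \<le> k"
  shows "dft_frame n k * mat_adjoint (dft_frame n k)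
    = of_real (real n / real k) \<cdot>\<^sub>m
      (partial_idft n k (alpha_par n k) * mat_adjoint (partial_idft n k (alpha_par n k)))"
proof -
  define c where "c = complex_of_real (sqrt (real n / real k))"
  define F where "F = partial_idft n k (alpha_par n k)"
  have F: "F \<in> carrier_mat n k" unfolding F_def by (rule partial_idft_carrier)
  have FB: "F * DFT k \<in> carrier_mat n k" by (rule mult_carrier_mat[OF F DFT_carrier])
  have "(F * DFT k) * mat_adjoint (F * DFT k) = F * mat_adjoint F"
    using mult_self_mult_mat_adjoint[OF F DFT_carrier] DFT_unitary(2)[OF assms(1)]
    by (simp add: right_mult_one_mat[OF F])
  moreover have "(c \<cdot>\<^sub>m (F * DFT k)) * mat_adjoint (c \<cdot>\<^sub>m (F * DFT k))
      = (cnj c * c) \<cdot>\<^sub>m ((F * DFT k) * mat_adjoint (F * DFT k))"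
    by (simp only: mat_adjoint_smult smult_mult_smult[OF FB mat_adjoint_carrier[OF FB]] mult.commute)
  moreover have "cnj c * c = of_real (real n / real k)"
    unfolding c_def by (rule cnj_of_real_sqrt_mult) simp
  ultimately show ?thesis unfolding dft_frame_eq F_def c_def by simp
qed

lemma row_sub_dft_frame_unitary:
  assumes "1 \<le> k" "0 < M" "n = M * k" "1 \<le> i0" "i0 \<le> M"
  shows "row_sub (dft_frame n k) k M i0 * mat_adjoint (row_sub (dft_frame n k) k M i0) = 1\<^sub>m k"
proof (rule eq_matI)
  define F where "F = partial_idft n k (alpha_par n k)"
  have kn: "k \<le> n" using assms by simp
  have row_less: "i0 - 1 + m * M < n" if "m < k" for m
    using mult_right_mono[of "Suc m" k M] that assms by (simp add: algebra_simps)
  fix m m' assume "m < dim_row (1\<^sub>m k)" "m' < dim_col (1\<^sub>m k)"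
  hence m: "m < k" and m': "m' < k" by simp_all
  have "(row_sub (dft_frame n k) k M i0 * mat_adjoint (row_sub (dft_frame n k) k M i0)) $$ (m, m')
      = (dft_frame n k * mat_adjoint (dft_frame n k)) $$ (i0 - 1 + m * M, i0 - 1 + m' * M)"
    using m m' row_less[OF m] row_less[OF m'] dft_frame_carrier[of n k]
    by (simp add: row_sub_mult_adjoint_index)
  also have "\<dots> = of_real (real n / real k) * (F * mat_adjoint F) $$ (i0 - 1 + m * M, i0 - 1 + m' * M)"
    using row_less[OF m] row_less[OF m'] partial_idft_carrier[of n k "alpha_par n k"]
    unfolding dft_frame_mult_adjoint[OF assms(1)] F_def by (subst index_smult_mat) auto
  also have "\<dots> = of_real (real n / real k) * (if m = m' then of_nat k / of_nat n else 0)"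
    unfolding F_def using m m' row_less[OF m] row_less[OF m'] assms alpha_par_le[OF assms(1) kn]
    by (simp only: partial_idft_coset_rows_orthogonal)
  also have "\<dots> = 1\<^sub>m k $$ (m, m')"
    using m m' assms by simp
  finally show "(row_sub (dft_frame n k) k M i0 * mat_adjoint (row_sub (dft_frame n k) k M i0)) $$ (m, m')
      = 1\<^sub>m k $$ (m, m')" .
qed (simp_all add: row_sub_def dft_frame_carrier[THEN carrier_matD(2)])

theorem mainTheorem5:
  fixes n k M i0 :: nat
  assumes "1 \<le> k" and "k < n" and "\<not> (even n \<and> even k)"
    and "0 < M" and "n = M * k"
    and "1 \<le> i0" and "i0 \<le> M"
  shows "det (row_sub (dft_frame n k) k M i0 * mat_adjoint (row_sub (dft_frame n k) k M i0)) = 1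
    \<and> tight_frame (dft_frame n k * the (mat_inverse (row_sub (dft_frame n k) k M i0)))"
proof -
  define G where "G = dft_frame n k"
  define Gk where "Gk = row_sub G k M i0"
  have G: "G \<in> carrier_mat n k"
    unfolding G_def by (rule dft_frame_carrier)
  have Gk: "Gk \<in> carrier_mat k k"
    using G unfolding Gk_def row_sub_def by auto
  have unitary: "Gk * mat_adjoint Gk = 1\<^sub>m k"
    unfolding Gk_def G_def using row_sub_dft_frame_unitary assms by simp
  have "tight_frame (G * mat_adjoint Gk)"
    using tight_frame_mult_adjoint_unitary[OF G Gk _ _ unitary, of "real n / real k"]
      dft_frame_gram[of k n] assms by (simp add: G_def)
  thus ?thesis
    using unitary mat_inverse_unitary[OF Gk unitary] by (simp add: G_def Gk_def)
qed

end
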